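(* Let $A\subset\mathbb{Z}$ be the union of $s$ segments $P_1,\dots,P_s$ (so $\max P_i+1<\min P_{i+1}$ for $1\le i<s$), where $1\le s\le |A|-1$. Let $S_A$ be the integer matrix with $s$ columns whose rows are all vectors $\mathbf e_{j_1}+\mathbf e_{j_2}-\mathbf e_{j_3}-\mathbf e_{j_4}\in\mathbb{Z}^s$ such that $(P_{j_1}+P_{j_2})\cap(P_{j_3}+P_{j_4})\neq\emptyset$ and not all of $j_1,j_2,j_3,j_4$ are equal. Then $\dim(A)=s-\mathrm{rank}(S_A)$.
   Context: A segment is a nonempty set of consecutive integers. $A\subset\mathbb{Z}$ is the union of $s$ segments if $A=P_1\cup\dots\cup P_s$ with each $P_i$ a segment of length $k_i$, $\max P_i+1<\min P_{i+1}$ for $1\le i<s$, and $k_i>1$ for some $i$. $\mathbf e_i$ denotes the $i$-th standard basis vector. Sets $A\subset G$, $B\subset G'$ in abelian groups are Freiman isomorphic of order 2 if there is a bijection $\phi:A\to B$ with $x+y=z+t\iff\phi(x)+\phi(y)=\phi(z)+\phi(t)$ for all $x,y,z,t\in A$. The dimension $\dim(A)$ is the largest $d$ such that some $B\subset\mathbb{Z}^d$ not contained in a hyperplane is Freiman isomorphic of order 2 to $A$. *)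

theory Defs
  imports Main "HOL-Library.Function_Algebras" "Jordan_Normal_Form.DL_Rank"
begin

definition freiman_iso2 :: "'a::ab_group_add set \<Rightarrow> 'b::ab_group_add set \<Rightarrow> bool" where
  "freiman_iso2 A B \<longleftrightarrow> (\<exists>\<phi>. bij_betw \<phi> A B \<and>
     (\<forall>x\<in>A. \<forall>y\<in>A. \<forall>z\<in>A. \<forall>t\<in>A. x + y = z + t \<longleftrightarrow> \<phi> x + \<phi> y = \<phi> z + \<phi> t))"

text \<open>Z^d is modelled as integer vectors nat => int vanishing outside {0..<d}.\<close>
definition intvecs :: "nat \<Rightarrow> (nat \<Rightarrow> int) set" where
  "intvecs d = {v. \<forall>i\<ge>d. v i = 0}"

definition in_hyperplane :: "nat \<Rightarrow> (nat \<Rightarrow> int) set \<Rightarrow> bool" where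
  "in_hyperplane d B \<longleftrightarrow> (\<exists>c :: nat \<Rightarrow> real. \<exists>\<alpha>. (\<exists>i<d. c i \<noteq> 0) \<and>
     (\<forall>b\<in>B. (\<Sum>i<d. c i * real_of_int (b i)) = \<alpha>))"

definition freiman_dim :: "int set \<Rightarrow> nat" where
  "freiman_dim A = (GREATEST d. \<exists>B. B \<subseteq> intvecs d \<and> \<not> in_hyperplane d B \<and> freiman_iso2 A B)"

definition sumset :: "int set \<Rightarrow> int set \<Rightarrow> int set" where
  "sumset X Y = {x + y | x y. x \<in> X \<and> y \<in> Y}"

text \<open>Segments P_j = {a j..b j}, j < s (0-indexed). The rows of S_A: all
  e_j1 + e_j2 - e_j3 - e_j4 (in Z^s, as rational vectors) with
  (P_j1+P_j2) meeting (P_j3+P_j4) and not all j's equal (duplicates are harmless for rank).\<close>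
definition S_rows :: "nat \<Rightarrow> (nat \<Rightarrow> int) \<Rightarrow> (nat \<Rightarrow> int) \<Rightarrow> rat vec list" where
  "S_rows s a b = [vec s (\<lambda>i. of_int ((if i = j1 then 1 else 0) + (if i = j2 then 1 else 0)
                               - (if i = j3 then 1 else 0) - (if i = j4 then 1 else 0))).
      j1 \<leftarrow> [0..<s], j2 \<leftarrow> [0..<s], j3 \<leftarrow> [0..<s], j4 \<leftarrow> [0..<s],
      sumset {a j1..b j1} {a j2..b j2} \<inter> sumset {a j3..b j3} {a j4..b j4} \<noteq> {} \<and>
      \<not> (j1 = j2 \<and> j2 = j3 \<and> j3 = j4)]"

definition S_mat :: "nat \<Rightarrow> (nat \<Rightarrow> int) \<Rightarrow> (nat \<Rightarrow> int) \<Rightarrow> rat mat" where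
  "S_mat s a b = mat_of_rows s (S_rows s a b)"

definition mat_rank :: "rat mat \<Rightarrow> nat" where
  "mat_rank M = vec_space.rank (dim_row M) M"

end

(* A Freiman isomorphism into Z^d is, coordinate by coordinate, affine on every segment with one
   common slope (fixed by two consecutive points of a segment of length > 1), and its intercepts
   w_j satisfy w_j1 + w_j2 = w_j3 + w_j4 whenever (P_j1 + P_j2) meets (P_j3 + P_j4), i.e. they lie
   in the kernel of S_A.  Since the constants also lie in that kernel, a model in Z^d that is not
   contained in a hyperplane forces d <= dim ker S_A = s - rank S_A.  Conversely, the map
   x |-> (x, u_1(j), ..., u_(k-1)(j)) for x in P_j, with integral kernel vectors u_i that together
   with the constants form a basis of the kernel, is a Freiman isomorphism onto a set spanning
   Z^k, k = dim ker S_A. *)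

theory Submission
  imports Defs
begin

lemma mult_mat_vec_index_col_sum:
  fixes S :: "'a::comm_semiring_0 mat"
  assumes "S \<in> carrier_mat m n" "i < m"
  shows "(S *\<^sub>v vec n w) $ i = (\<Sum>j<n. w j * col S j $ i)"
  using assms
  by (auto simp: mult_mat_vec_def scalar_prod_def lessThan_atLeast0 mult.commute intro!: sum.cong)

lemma (in vectorspace) maximal_lin_indpt_span:
  assumes max: "maximal U (\<lambda>T. T \<subseteq> X \<and> lin_indpt T)"
    and X: "X \<subseteq> carrier V" and v: "v \<in> X"
  shows "v \<in> span U"
proof -
  have U: "U \<subseteq> X" "lin_indpt U" using max unfolding maximal_def by auto
  show ?thesis
  proof (cases "v \<in> U")
    case True
    thus ?thesis using span_mem U(1) X by blast
  next
    case False
    have "lin_dep (U \<union> {v})"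
    proof (rule ccontr)
      assume "\<not> lin_dep (U \<union> {v})"
      moreover have "U \<subseteq> U \<union> {v}" "U \<union> {v} \<subseteq> X" using U(1) v by auto
      ultimately have "U \<union> {v} = U"
        using max unfolding maximal_def by (elim conjE allE[of _ "U \<union> {v}"]) simp
      with False show False by blast
    qed
    thus ?thesis using lin_dep_iff_in_span[OF _ U(2) _ False] U(1) X v by blast
  qed
qed

lemma cols_subset_index_set:
  assumes S: "S \<in> carrier_mat m n" and U: "U \<subseteq> set (cols S)"
  obtains J where "J \<subseteq> {..<n}" "bij_betw (col S) J U"
proof -
  define idx where "idx u = (SOME j. j < n \<and> col S j = u)" for u
  have idx: "idx u < n \<and> col S (idx u) = u" if "u \<in> U" for u
  proof -
    from that U obtain j where "j < length (cols S)" "cols S ! j = u"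
      by (metis in_set_conv_nth subsetD)
    hence "j < n \<and> col S j = u" using S by auto
    thus ?thesis unfolding idx_def by (rule someI)
  qed
  have "bij_betw (col S) (idx ` U) U"
    by (rule bij_betw_byWitness[where f' = idx]) (auto simp: idx)
  moreover have "idx ` U \<subseteq> {..<n}" using idx by auto
  ultimately show thesis using that by blast
qed

lemma (in vec_space) pivot_columns:
  assumes S: "S \<in> carrier_mat n nc"
  obtains J where "J \<subseteq> {..<nc}" "card J = rank S"
    and "\<And>w. (\<And>i. i < n \<Longrightarrow> (\<Sum>j\<in>J. w j * col S j $ i) = 0) \<Longrightarrow> \<forall>j\<in>J. w j = 0"
    and "\<And>f. f < nc \<Longrightarrow> \<exists>c. \<forall>i<n. col S f $ i = (\<Sum>j\<in>J. c j * col S j $ i)"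
proof -
  obtain U where U: "maximal U (\<lambda>T. T \<subseteq> set (cols S) \<and> lin_indpt T)"
    using maximal_exists[of "\<lambda>T. T \<subseteq> set (cols S) \<and> lin_indpt T" "card (set (cols S))" "{}"]
    by (meson List.finite_set card_mono empty_iff empty_subsetI finite_lin_indpt2 rev_finite_subset)
  have U_cols: "U \<subseteq> set (cols S)" and U_indpt: "lin_indpt U" using U unfolding maximal_def by auto
  have cols: "set (cols S) \<subseteq> carrier_vec n" using S cols_dim by blast
  have U_fin: "finite U" using U_cols finite_subset by blast
  have U_carrier: "U \<subseteq> carrier_vec n" using U_cols cols by blast
  obtain J where J: "J \<subseteq> {..<nc}" and bij: "bij_betw (col S) J U"
    using cols_subset_index_set[OF S U_cols] .
  have sum_J: "(\<Sum>j\<in>J. g (col S j) * col S j $ i) = lincomb g U $ i" if "i < n" for g i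
    unfolding lincomb_index[OF that U_carrier] using sum.reindex_bij_betw[OF bij] .
  have "card J = rank S" using rank_card_indpt[OF S U] bij_betw_same_card[OF bij] by simp
  moreover have "\<forall>j\<in>J. w j = 0" if w: "\<And>i. i < n \<Longrightarrow> (\<Sum>j\<in>J. w j * col S j $ i) = 0" for w
  proof -
    define a where "a = w \<circ> the_inv_into J (col S)"
    have a_col: "a (col S j) = w j" if "j \<in> J" for j
      using that bij_betw_imp_inj_on[OF bij] by (simp add: a_def the_inv_into_f_f)
    have "lincomb a U $ i = 0" if "i < n" for i
    proof -
      have "lincomb a U $ i = (\<Sum>j\<in>J. w j * col S j $ i)"
        unfolding sum_J[OF that, symmetric] using a_col by (intro sum.cong) auto
      thus ?thesis using w[OF that] by simp
    qed
    hence "lincomb a U = 0\<^sub>v n"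
      using lincomb_dim[OF U_fin U_carrier] by (intro eq_vecI) auto
    hence "a u = 0" if "u \<in> U" for u
      using U_indpt that U_fin unfolding lin_dep_def by (auto simp: class_field_def)
    thus ?thesis using a_col bij_betw_apply[OF bij] by fastforce
  qed
  moreover have "\<exists>c. \<forall>i<n. col S f $ i = (\<Sum>j\<in>J. c j * col S j $ i)" if f: "f < nc" for f
  proof -
    have "col S f \<in> set (cols S)" using S f by (auto simp: in_set_conv_nth intro!: exI[of _ f])
    with U cols have "col S f \<in> span U" by (rule maximal_lin_indpt_span)
    then obtain c where "col S f = lincomb c U"
      using finite_span[OF U_fin U_carrier] by auto
    with sum_J show ?thesis by (intro exI[of _ "\<lambda>j. c (col S j)"]) simp
  qed
  ultimately show thesis using that J by blast
qed

lemma kernel_free_coordinates: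
  fixes S :: "'a::field mat"
  assumes S: "S \<in> carrier_mat m n"
  obtains F where "F \<subseteq> {..<n}" "card F = n - vec_space.rank m S"
    and "\<And>f. f \<in> F \<Longrightarrow> \<exists>w. S *\<^sub>v vec n w = 0\<^sub>v m \<and> w f = 1 \<and> (\<forall>f'\<in>F - {f}. w f' = 0)"
    and "\<And>w. S *\<^sub>v vec n w = 0\<^sub>v m \<Longrightarrow> \<forall>f\<in>F. w f = 0 \<Longrightarrow> \<forall>j<n. w j = 0"
proof (rule vec_space.pivot_columns[OF S])
  fix J assume J: "J \<subseteq> {..<n}" "card J = vec_space.rank m S"
    and indep: "\<And>w. (\<And>i. i < m \<Longrightarrow> (\<Sum>j\<in>J. w j * col S j $ i) = 0) \<Longrightarrow> \<forall>j\<in>J. w j = 0"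
    and span: "\<And>f. f < n \<Longrightarrow> \<exists>c. \<forall>i<m. col S f $ i = (\<Sum>j\<in>J. c j * col S j $ i)"
  define F where "F = {..<n} - J"
  have fin_J: "finite J" using J(1) finite_subset by blast
  have card_F: "card F = n - vec_space.rank m S"
    unfolding F_def using J by (simp add: card_Diff_subset fin_J)
  have unit: "\<exists>w. S *\<^sub>v vec n w = 0\<^sub>v m \<and> w f = 1 \<and> (\<forall>f'\<in>F - {f}. w f' = 0)" if "f \<in> F" for f
  proof -
    have f: "f < n" "f \<notin> J" using that F_def by auto
    obtain c where c: "\<And>i. i < m \<Longrightarrow> col S f $ i = (\<Sum>j\<in>J. c j * col S j $ i)"
      using span[OF f(1)] by blast
    define w where "w j = (if j = f then 1 else if j \<in> J then - c j else 0)" for j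
    have "(S *\<^sub>v vec n w) $ i = 0" if i: "i < m" for i
    proof -
      have "(S *\<^sub>v vec n w) $ i = (\<Sum>j\<in>insert f J. w j * col S j $ i)"
        unfolding mult_mat_vec_index_col_sum[OF S i]
        by (rule sum.mono_neutral_right) (use J f w_def in auto)
      also have "\<dots> = col S f $ i + (\<Sum>j\<in>J. w j * col S j $ i)"
        using f fin_J by (simp add: w_def)
      also have "(\<Sum>j\<in>J. w j * col S j $ i) = - (\<Sum>j\<in>J. c j * col S j $ i)"
        unfolding sum_negf[symmetric] by (rule sum.cong) (use f in \<open>auto simp: w_def\<close>)
      finally show ?thesis using c[OF i] by simp
    qed
    hence "S *\<^sub>v vec n w = 0\<^sub>v m" using S by (intro eq_vecI) auto
    moreover have "w f = 1" "\<forall>f'\<in>F - {f}. w f' = 0" using F_def w_def by auto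
    ultimately show ?thesis by blast
  qed
  have determined: "\<forall>j<n. w j = 0" if w: "S *\<^sub>v vec n w = 0\<^sub>v m" and w_F: "\<forall>f\<in>F. w f = 0" for w
  proof -
    have "(\<Sum>j\<in>J. w j * col S j $ i) = 0" if i: "i < m" for i
    proof -
      have "(\<Sum>j\<in>J. w j * col S j $ i) = (S *\<^sub>v vec n w) $ i"
        unfolding mult_mat_vec_index_col_sum[OF S i]
        by (rule sum.mono_neutral_left) (use J w_F F_def in auto)
      thus ?thesis using w i by simp
    qed
    with indep have "\<forall>j\<in>J. w j = 0" by blast
    thus ?thesis using w_F F_def by auto
  qed
  have "F \<subseteq> {..<n}" unfolding F_def by auto
  from that[OF this card_F unit determined] show thesis .
qed

lemma homogeneous_system_nontrivial_solution:
  fixes y :: "'i \<Rightarrow> 'j \<Rightarrow> 'a::field"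
  assumes "finite F" "finite I" "card F < card I"
  shows "\<exists>c. (\<exists>i\<in>I. c i \<noteq> 0) \<and> (\<forall>j\<in>F. (\<Sum>i\<in>I. c i * y i j) = 0)"
  using assms
proof (induction F arbitrary: I y rule: finite_induct)
  case empty
  then obtain i where "i \<in> I" by fastforce
  thus ?case by (intro exI[of _ "\<lambda>_. 1"]) auto
next
  case (insert f F)
  show ?case
  proof (cases "\<forall>i\<in>I. y i f = 0")
    case True
    with insert show ?thesis by fastforce
  next
    case False
    then obtain i0 where i0: "i0 \<in> I" "y i0 f \<noteq> 0" by auto
    text \<open>Eliminate the unknown i0 using the equation f.\<close>
    define I' where "I' = I - {i0}"
    define y' where "y' i j = y i j - (y i f / y i0 f) * y i0 j" for i j
    have "card F < card I'" using insert i0 unfolding I'_def by auto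
    with insert.IH[of I' y'] insert.prems obtain c' where
      c': "\<exists>i\<in>I'. c' i \<noteq> 0" "\<forall>j\<in>F. (\<Sum>i\<in>I'. c' i * y' i j) = 0" unfolding I'_def by auto
    define c where "c i = (if i = i0 then - (\<Sum>k\<in>I'. c' k * (y k f / y i0 f)) else c' i)" for i
    have c_y: "(\<Sum>i\<in>I. c i * y i j) = (\<Sum>i\<in>I'. c' i * y' i j)" for j
    proof -
      have "(\<Sum>i\<in>I. c i * y i j) = c i0 * y i0 j + (\<Sum>i\<in>I'. c' i * y i j)"
        unfolding I'_def using i0 insert.prems by (simp add: sum.remove c_def)
      also have "\<dots> = (\<Sum>i\<in>I'. c' i * y' i j)"
        unfolding y'_def c_def
        by (simp add: right_diff_distrib sum_subtractf sum_distrib_right mult.assoc)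
      finally show ?thesis .
    qed
    have "\<forall>j\<in>insert f F. (\<Sum>i\<in>I. c i * y i j) = 0"
      using c'(2) i0 by (auto simp: c_y y'_def)
    moreover have "\<exists>i\<in>I. c i \<noteq> 0" using c'(1) unfolding c_def I'_def by auto
    ultimately show ?thesis by blast
  qed
qed

lemma mat_of_rows_mult_vec_eq_zero_iff:
  assumes "set rs \<subseteq> carrier_vec n"
  shows "mat_of_rows n rs *\<^sub>v v = 0\<^sub>v (length rs) \<longleftrightarrow> (\<forall>r\<in>set rs. r \<bullet> v = 0)"
proof -
  have "(mat_of_rows n rs *\<^sub>v v) $ k = rs ! k \<bullet> v" if "k < length rs" for k
    using that assms by (simp add: mat_of_rows_row subset_iff)
  thus ?thesis by (auto simp: vec_eq_iff all_set_conv_all_nth)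
qed

definition relation_row :: "nat \<Rightarrow> nat \<Rightarrow> nat \<Rightarrow> nat \<Rightarrow> nat \<Rightarrow> rat vec" where
  "relation_row n j1 j2 j3 j4 = vec n (\<lambda>i. of_int ((if i = j1 then 1 else 0) + (if i = j2 then 1 else 0)
     - (if i = j3 then 1 else 0) - (if i = j4 then 1 else 0)))"

lemma relation_row_scalar_prod:
  assumes "j1 < n" "j2 < n" "j3 < n" "j4 < n"
  shows "relation_row n j1 j2 j3 j4 \<bullet> vec n w = w j1 + w j2 - w j3 - w j4"
proof -
  have "relation_row n j1 j2 j3 j4 \<bullet> vec n w = (\<Sum>i<n. (if i = j1 then w i else 0)
      + (if i = j2 then w i else 0) - (if i = j3 then w i else 0) - (if i = j4 then w i else 0))"
    unfolding relation_row_def scalar_prod_def lessThan_atLeast0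
    by (intro sum.cong) (auto simp: algebra_simps)
  also have "\<dots> = w j1 + w j2 - w j3 - w j4"
    using assms by (simp add: sum.distrib sum_subtractf)
  finally show ?thesis .
qed

lemma common_denominator:
  fixes w :: "nat \<Rightarrow> rat"
  shows "\<exists>N::int. N > 0 \<and> (\<forall>j<n. of_int N * w j \<in> \<int>)"
proof -
  define q where "q j = snd (quotient_of (w j))" for j
  have q_pos: "q j > 0" for j
    unfolding q_def by (metis prod.collapse quotient_of_denom_pos)
  have q_int: "of_int (q j) * w j \<in> \<int>" for j
  proof -
    obtain p where "quotient_of (w j) = (p, q j)" unfolding q_def by (metis prod.collapse)
    from quotient_of_div[OF this] q_pos[of j] show ?thesis by simp
  qed
  have "of_int (\<Prod>k<n. q k) * w j \<in> \<int>" if "j < n" for j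
  proof -
    have "of_int (\<Prod>k<n. q k) * w j = of_int (\<Prod>k\<in>{..<n} - {j}. q k) * (of_int (q j) * w j)"
      using that by (simp add: prod.remove mult_ac)
    thus ?thesis by (metis Ints_mult Ints_of_int q_int)
  qed
  moreover have "(\<Prod>k<n. q k) > 0" using q_pos by (simp add: prod_pos)
  ultimately show ?thesis by blast
qed

definition freiman_hom2 :: "'a::ab_semigroup_add set \<Rightarrow> ('a \<Rightarrow> 'b::ab_semigroup_add) \<Rightarrow> bool" where
  "freiman_hom2 A \<psi> \<longleftrightarrow>
     (\<forall>x\<in>A. \<forall>y\<in>A. \<forall>z\<in>A. \<forall>t\<in>A. x + y = z + t \<longrightarrow> \<psi> x + \<psi> y = \<psi> z + \<psi> t)"

lemma freiman_iso2_imp_freiman_hom2: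
  assumes "freiman_iso2 A B"
  obtains \<phi> where "bij_betw \<phi> A B" "freiman_hom2 A \<phi>"
proof -
  from assms obtain \<phi> where bij: "bij_betw \<phi> A B"
    and iso: "\<forall>x\<in>A. \<forall>y\<in>A. \<forall>z\<in>A. \<forall>t\<in>A. x + y = z + t \<longleftrightarrow> \<phi> x + \<phi> y = \<phi> z + \<phi> t"
    unfolding freiman_iso2_def by blast
  have "freiman_hom2 A \<phi>"
    unfolding freiman_hom2_def
  proof (intro ballI impI)
    fix x y z t assume "x \<in> A" "y \<in> A" "z \<in> A" "t \<in> A" "x + y = z + t"
    with iso show "\<phi> x + \<phi> y = \<phi> z + \<phi> t" by blast
  qed
  with bij show thesis by (rule that)
qed

lemma freiman_hom2_coordinate:
  fixes \<phi> :: "'a::ab_semigroup_add \<Rightarrow> 'i \<Rightarrow> 'b::ab_semigroup_add"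
  assumes "freiman_hom2 A \<phi>"
  shows "freiman_hom2 A (\<lambda>x. \<phi> x i)"
  unfolding freiman_hom2_def
proof (intro ballI impI)
  fix x y z t assume "x \<in> A" "y \<in> A" "z \<in> A" "t \<in> A" "x + y = z + t"
  with assms have "\<phi> x + \<phi> y = \<phi> z + \<phi> t" unfolding freiman_hom2_def by blast
  from fun_cong[OF this, of i] show "\<phi> x i + \<phi> y i = \<phi> z i + \<phi> t i" by simp
qed

lemma freiman_hom_affine_on_interval:
  fixes \<psi> :: "int \<Rightarrow> int"
  assumes hom: "freiman_hom2 A \<psi>"
    and x0: "x0 \<in> A" "x0 + 1 \<in> A"
    and interval: "{p..q} \<subseteq> A" and x: "x \<in> {p..q}"
  shows "\<psi> x = \<psi> p + (x - p) * (\<psi> (x0 + 1) - \<psi> x0)"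
proof -
  have step: "\<psi> (y + 1) = \<psi> y + (\<psi> (x0 + 1) - \<psi> x0)" if "y \<in> A" "y + 1 \<in> A" for y
  proof -
    have "y + (x0 + 1) = (y + 1) + x0" by simp
    with hom that x0 have "\<psi> y + \<psi> (x0 + 1) = \<psi> (y + 1) + \<psi> x0"
      unfolding freiman_hom2_def by blast
    thus ?thesis by simp
  qed
  have "p + int k \<le> q \<Longrightarrow> \<psi> (p + int k) = \<psi> p + int k * (\<psi> (x0 + 1) - \<psi> x0)" for k
  proof (induction k)
    case (Suc k)
    hence "p + int k \<in> A" "p + int k + 1 \<in> A" using interval by auto
    from step[OF this] Suc show ?case by (simp add: algebra_simps)
  qed simp
  from this[of "nat (x - p)"] x show ?thesis by simp
qed

locale segment_union =
  fixes A :: "int set" and s :: nat and a b :: "nat \<Rightarrow> int"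
  assumes A_eq: "A = (\<Union>j<s. {a j..b j})"
    and segment_nonempty: "\<And>j. j < s \<Longrightarrow> a j \<le> b j"
    and segment_gap: "\<And>j. j + 1 < s \<Longrightarrow> b j + 1 < a (j + 1)"
    and long_segment: "\<exists>j<s. a j < b j"
begin

lemma segment_subset: "j < s \<Longrightarrow> {a j..b j} \<subseteq> A"
  using A_eq by auto

lemma segments_ordered: "i < j \<Longrightarrow> j < s \<Longrightarrow> b i < a j"
proof (induction j)
  case (Suc j)
  have "b i \<le> b j"
  proof (cases "i = j")
    case False
    with Suc have "b i < a j" by simp
    thus ?thesis using segment_nonempty[of j] Suc.prems by simp
  qed simp
  also have "b j < a (Suc j)" using segment_gap[of j] Suc.prems by simp
  finally show ?case .
qed simp

definition segment_of :: "int \<Rightarrow> nat" where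
  "segment_of x = (THE j. j < s \<and> x \<in> {a j..b j})"

lemma segment_unique:
  assumes "i < s" "j < s" "x \<in> {a i..b i}" "x \<in> {a j..b j}"
  shows "i = j"
proof (rule ccontr)
  assume "i \<noteq> j"
  then consider "i < j" | "j < i" by linarith
  thus False
  proof cases
    case 1
    with segments_ordered[of i j] assms show False by simp
  next
    case 2
    with segments_ordered[of j i] assms show False by simp
  qed
qed

lemma segment_of_eq:
  assumes "j < s" "x \<in> {a j..b j}"
  shows "segment_of x = j"
  unfolding segment_of_def
proof (rule the_equality)
  show "j < s \<and> x \<in> {a j..b j}" using assms ..
  show "\<And>i. i < s \<and> x \<in> {a i..b i} \<Longrightarrow> i = j" using segment_unique assms by blast
qed

lemma segment_of_mem:
  assumes "x \<in> A"
  shows "segment_of x < s \<and> x \<in> {a (segment_of x)..b (segment_of x)}"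
proof -
  obtain j where "j < s" "x \<in> {a j..b j}" using assms A_eq by auto
  with segment_of_eq[OF this] show ?thesis by simp
qed

lemma consecutive_points:
  obtains x0 where "x0 \<in> A" "x0 + 1 \<in> A" "segment_of (x0 + 1) = segment_of x0"
proof -
  obtain j where j: "j < s" "a j < b j" using long_segment by blast
  hence "a j \<in> {a j..b j}" "a j + 1 \<in> {a j..b j}" by auto
  with segment_subset[OF j(1)] segment_of_eq[OF j(1)] show thesis by (intro that[of "a j"]) auto
qed

lemma segment_start:
  assumes "j < s"
  shows "a j \<in> A \<and> segment_of (a j) = j"
proof -
  have "a j \<in> {a j..b j}" using segment_nonempty[OF assms] by simp
  with segment_subset[OF assms] segment_of_eq[OF assms] show ?thesis by blast
qed

definition sums_meet :: "nat \<Rightarrow> nat \<Rightarrow> nat \<Rightarrow> nat \<Rightarrow> bool" where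
  "sums_meet j1 j2 j3 j4 \<longleftrightarrow>
     sumset {a j1..b j1} {a j2..b j2} \<inter> sumset {a j3..b j3} {a j4..b j4} \<noteq> {}"

definition S_kernel :: "(nat \<Rightarrow> 'a::ab_semigroup_add) \<Rightarrow> bool" where
  "S_kernel w \<longleftrightarrow> (\<forall>j1<s. \<forall>j2<s. \<forall>j3<s. \<forall>j4<s.
     sums_meet j1 j2 j3 j4 \<longrightarrow> w j1 + w j2 = w j3 + w j4)"

lemma S_kernelD:
  "S_kernel w \<Longrightarrow> j1 < s \<Longrightarrow> j2 < s \<Longrightarrow> j3 < s \<Longrightarrow> j4 < s \<Longrightarrow> sums_meet j1 j2 j3 j4 \<Longrightarrow>
    w j1 + w j2 = w j3 + w j4"
  unfolding S_kernel_def by blast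

lemma S_kernel_const: "S_kernel (\<lambda>_. c)"
  unfolding S_kernel_def by simp

lemma S_kernel_lincomb:
  fixes W :: "'i \<Rightarrow> nat \<Rightarrow> 'a::comm_ring"
  assumes "\<And>i. i \<in> I \<Longrightarrow> S_kernel (W i)"
  shows "S_kernel (\<lambda>j. (\<Sum>i\<in>I. c i * W i j) - l)"
  unfolding S_kernel_def
proof (intro allI impI)
  fix j1 j2 j3 j4 assume "j1 < s" "j2 < s" "j3 < s" "j4 < s" "sums_meet j1 j2 j3 j4"
  hence "(\<Sum>i\<in>I. c i * (W i j1 + W i j2)) = (\<Sum>i\<in>I. c i * (W i j3 + W i j4))"
    using assms unfolding S_kernel_def by (intro sum.cong) auto
  thus "(\<Sum>i\<in>I. c i * W i j1) - l + ((\<Sum>i\<in>I. c i * W i j2) - l) =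
        (\<Sum>i\<in>I. c i * W i j3) - l + ((\<Sum>i\<in>I. c i * W i j4) - l)"
    by (simp add: sum.distrib distrib_left)
qed

lemma S_kernel_of_int:
  "S_kernel (\<lambda>j. of_int (u j) :: 'a::ring_char_0) \<longleftrightarrow> S_kernel u"
  unfolding S_kernel_def by (simp only: of_int_add[symmetric] of_int_eq_iff)

lemma S_kernel_integral_multiple:
  fixes w :: "nat \<Rightarrow> rat"
  assumes "S_kernel w"
  obtains N :: int and u where "N > 0" "S_kernel u" "\<And>j. j < s \<Longrightarrow> of_int (u j) = of_int N * w j"
proof -
  obtain N :: int where N: "N > 0" "\<forall>j<s. of_int N * w j \<in> \<int>"
    using common_denominator by blast
  define u where "u j = \<lfloor>of_int N * w j\<rfloor>" for j
  have u: "of_int (u j) = of_int N * w j" if "j < s" for j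
    using N(2) that unfolding u_def by (auto elim!: Ints_cases)
  have "S_kernel (\<lambda>j. of_int (u j) :: rat)"
    using assms unfolding S_kernel_def by (simp add: u distrib_left[symmetric])
  thus thesis using that N(1) u S_kernel_of_int by blast
qed

lemma sums_meet_segment_of:
  assumes "x \<in> A" "y \<in> A" "z \<in> A" "t \<in> A" "x + y = z + t"
  shows "sums_meet (segment_of x) (segment_of y) (segment_of z) (segment_of t)"
proof -
  have "x + y \<in> sumset {a (segment_of x)..b (segment_of x)} {a (segment_of y)..b (segment_of y)}"
    using segment_of_mem[OF assms(1)] segment_of_mem[OF assms(2)] unfolding sumset_def by blast
  moreover have "z + t \<in> sumset {a (segment_of z)..b (segment_of z)} {a (segment_of t)..b (segment_of t)}"
    using segment_of_mem[OF assms(3)] segment_of_mem[OF assms(4)] unfolding sumset_def by blast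
  ultimately show ?thesis unfolding sums_meet_def assms(5) by blast
qed

lemma S_kernel_freiman_hom:
  assumes "S_kernel u"
  shows "freiman_hom2 A (\<lambda>x. u (segment_of x))"
  unfolding freiman_hom2_def
proof (intro ballI impI)
  fix x y z t assume xyzt: "x \<in> A" "y \<in> A" "z \<in> A" "t \<in> A" and "x + y = z + t"
  with sums_meet_segment_of have "sums_meet (segment_of x) (segment_of y) (segment_of z) (segment_of t)"
    by blast
  with S_kernelD[OF assms] segment_of_mem[OF xyzt(1)] segment_of_mem[OF xyzt(2)]
    segment_of_mem[OF xyzt(3)] segment_of_mem[OF xyzt(4)]
  show "u (segment_of x) + u (segment_of y) = u (segment_of z) + u (segment_of t)" by blast
qed

lemma mem_S_rows: "r \<in> set (S_rows s a b) \<longleftrightarrow> (\<exists>j1<s. \<exists>j2<s. \<exists>j3<s. \<exists>j4<s.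
    sums_meet j1 j2 j3 j4 \<and> \<not> (j1 = j2 \<and> j2 = j3 \<and> j3 = j4) \<and> r = relation_row s j1 j2 j3 j4)"
  unfolding S_rows_def relation_row_def sums_meet_def
  by (simp del: of_int_add of_int_diff add: atLeast0LessThan Bex_def)

lemma S_mat_kernel_iff:
  "S_mat s a b *\<^sub>v vec s w = 0\<^sub>v (length (S_rows s a b)) \<longleftrightarrow> S_kernel w"
proof -
  have "set (S_rows s a b) \<subseteq> carrier_vec s" by (auto simp: mem_S_rows relation_row_def)
  hence "S_mat s a b *\<^sub>v vec s w = 0\<^sub>v (length (S_rows s a b)) \<longleftrightarrow>
      (\<forall>r\<in>set (S_rows s a b). r \<bullet> vec s w = 0)"
    unfolding S_mat_def by (rule mat_of_rows_mult_vec_eq_zero_iff)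
  also have "\<dots> \<longleftrightarrow> S_kernel w"
  proof
    assume rows: "\<forall>r\<in>set (S_rows s a b). r \<bullet> vec s w = 0"
    show "S_kernel w" unfolding S_kernel_def
    proof (intro allI impI)
      fix j1 j2 j3 j4 assume j: "j1 < s" "j2 < s" "j3 < s" "j4 < s" and "sums_meet j1 j2 j3 j4"
      show "w j1 + w j2 = w j3 + w j4"
      proof (cases "j1 = j2 \<and> j2 = j3 \<and> j3 = j4")
        case False
        with j \<open>sums_meet j1 j2 j3 j4\<close> have "relation_row s j1 j2 j3 j4 \<in> set (S_rows s a b)"
          unfolding mem_S_rows by blast
        with rows have "relation_row s j1 j2 j3 j4 \<bullet> vec s w = 0" by blast
        thus ?thesis unfolding relation_row_scalar_prod[OF j] by simp
      qed auto
    qed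
  next
    assume "S_kernel w"
    thus "\<forall>r\<in>set (S_rows s a b). r \<bullet> vec s w = 0"
      by (auto simp: mem_S_rows S_kernel_def relation_row_scalar_prod)
  qed
  finally show ?thesis .
qed

lemma freiman_hom_decomposition:
  fixes \<psi> :: "int \<Rightarrow> int"
  assumes hom: "freiman_hom2 A \<psi>"
  obtains W v where "S_kernel W" "\<And>x. x \<in> A \<Longrightarrow> \<psi> x = W (segment_of x) + x * v"
proof -
  obtain x0 where x0: "x0 \<in> A" "x0 + 1 \<in> A" using consecutive_points by blast
  define v where "v = \<psi> (x0 + 1) - \<psi> x0"
  define W where "W j = \<psi> (a j) - a j * v" for j
  have affine: "\<psi> x = W j + x * v" if "j < s" "x \<in> {a j..b j}" for j x
    using freiman_hom_affine_on_interval[OF hom x0 segment_subset[OF that(1)] that(2)]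
    by (simp add: W_def v_def algebra_simps)
  have "S_kernel W" unfolding S_kernel_def
  proof (intro allI impI)
    fix j1 j2 j3 j4 assume j: "j1 < s" "j2 < s" "j3 < s" "j4 < s" and "sums_meet j1 j2 j3 j4"
    then obtain x y z t where xyzt: "x \<in> {a j1..b j1}" "y \<in> {a j2..b j2}" "z \<in> {a j3..b j3}"
        "t \<in> {a j4..b j4}" "x + y = z + t"
      unfolding sums_meet_def sumset_def by blast
    have "x \<in> A" "y \<in> A" "z \<in> A" "t \<in> A"
      using segment_subset j xyzt by blast+
    with hom xyzt(5) have "\<psi> x + \<psi> y = \<psi> z + \<psi> t" unfolding freiman_hom2_def by blast
    hence "W j1 + x * v + (W j2 + y * v) = W j3 + z * v + (W j4 + t * v)"
      unfolding affine[OF j(1) xyzt(1)] affine[OF j(2) xyzt(2)] affine[OF j(3) xyzt(3)]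
        affine[OF j(4) xyzt(4)] .
    moreover have "x * v + y * v = z * v + t * v"
      using xyzt(5) by (simp add: distrib_right[symmetric])
    ultimately show "W j1 + W j2 = W j3 + W j4" by linarith
  qed
  moreover have "\<psi> x = W (segment_of x) + x * v" if "x \<in> A" for x
    using affine segment_of_mem[OF that] by blast
  ultimately show thesis using that by blast
qed

definition determines_kernel :: "nat set \<Rightarrow> bool" where
  "determines_kernel F \<longleftrightarrow>
     (\<forall>w :: nat \<Rightarrow> rat. S_kernel w \<longrightarrow> (\<forall>f\<in>F. w f = 0) \<longrightarrow> (\<forall>j<s. w j = 0))"

text \<open>Modulo constants, a kernel vector is determined by its values on F relative to f0; with
  the slope this gives card F rational coordinates per index i, so d > card F of them are dependent.\<close>
lemma kernel_affine_dependence: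
  fixes W :: "nat \<Rightarrow> nat \<Rightarrow> int" and v :: "nat \<Rightarrow> int"
  assumes F: "F \<subseteq> {..<s}" "f0 \<in> F"
    and determined: "determines_kernel F"
    and W: "\<And>i. S_kernel (W i)" and d: "card F < d"
  shows "\<exists>(c :: nat \<Rightarrow> rat) l. (\<exists>i<d. c i \<noteq> 0)
    \<and> (\<forall>j<s. (\<Sum>i<d. c i * of_int (W i j)) = l) \<and> (\<Sum>i<d. c i * of_int (v i)) = 0"
proof -
  define y :: "nat \<Rightarrow> nat \<Rightarrow> rat"
    where "y i j = (if j = f0 then of_int (v i) else of_int (W i j - W i f0))" for i j
  have "card F < card {..<d}" using d by simp
  then obtain c where c_nz: "\<exists>i\<in>{..<d}. c i \<noteq> 0" and c: "\<forall>j\<in>F. (\<Sum>i<d. c i * y i j) = 0"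
    using homogeneous_system_nontrivial_solution[of F "{..<d}" y] finite_subset[OF F(1)] by blast
  define l where "l = (\<Sum>i<d. c i * of_int (W i f0))"
  have "S_kernel (\<lambda>j. (\<Sum>i<d. c i * of_int (W i j)) - l)"
    by (rule S_kernel_lincomb) (simp add: S_kernel_of_int W)
  moreover have "\<forall>f\<in>F. (\<Sum>i<d. c i * of_int (W i f)) - l = 0"
  proof
    fix f assume "f \<in> F"
    show "(\<Sum>i<d. c i * of_int (W i f)) - l = 0"
    proof (cases "f = f0")
      case False
      hence "(\<Sum>i<d. c i * of_int (W i f)) - l = (\<Sum>i<d. c i * y i f)"
        by (simp add: y_def l_def right_diff_distrib sum_subtractf)
      thus ?thesis using c \<open>f \<in> F\<close> by simp
    qed (simp add: l_def)
  qed
  ultimately have "\<forall>j<s. (\<Sum>i<d. c i * of_int (W i j)) - l = 0"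
    using determined unfolding determines_kernel_def by blast
  moreover have "(\<Sum>i<d. c i * of_int (v i)) = 0"
    using bspec[OF c F(2)] by (simp add: y_def)
  ultimately show ?thesis using c_nz by (intro exI[of _ c] exI[of _ l]) auto
qed

lemma model_dim_le_card:
  assumes F: "F \<subseteq> {..<s}" "f0 \<in> F"
    and determined: "determines_kernel F"
    and B: "\<not> in_hyperplane d B" "freiman_iso2 A B"
  shows "d \<le> card F"
proof (rule ccontr)
  assume "\<not> d \<le> card F"
  obtain \<phi> where \<phi>: "bij_betw \<phi> A B" and hom: "freiman_hom2 A \<phi>"
    using B(2) by (rule freiman_iso2_imp_freiman_hom2)
  have "\<exists>W v. S_kernel W \<and> (\<forall>x\<in>A. \<phi> x i = W (segment_of x) + x * v)" for i
    by (rule freiman_hom_decomposition[OF freiman_hom2_coordinate[OF hom, of i]]) blast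
  then obtain W v where W: "\<And>i. S_kernel (W i)"
    and \<phi>_eq: "\<And>i x. x \<in> A \<Longrightarrow> \<phi> x i = W i (segment_of x) + x * v i"
    by metis
  have "card F < d" using \<open>\<not> d \<le> card F\<close> by simp
  from kernel_affine_dependence[where W = W and v = v, OF F determined W this]
  obtain c :: "nat \<Rightarrow> rat" and l where c_nz: "\<exists>i<d. c i \<noteq> 0"
    and W_level: "\<forall>j<s. (\<Sum>i<d. c i * of_int (W i j)) = l"
    and v_null: "(\<Sum>i<d. c i * of_int (v i)) = 0"
    by blast
  have "in_hyperplane d B"
    unfolding in_hyperplane_def
  proof (intro exI[of _ "\<lambda>i. real_of_rat (c i)"] exI[of _ "real_of_rat l"] conjI ballI)
    show "\<exists>i<d. real_of_rat (c i) \<noteq> 0" using c_nz by auto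
    fix p assume "p \<in> B"
    then obtain x where x: "x \<in> A" "p = \<phi> x" using \<phi> by (auto simp: bij_betw_def)
    have "(\<Sum>i<d. c i * of_int (\<phi> x i)) =
        (\<Sum>i<d. c i * of_int (W i (segment_of x))) + of_int x * (\<Sum>i<d. c i * of_int (v i))"
      by (simp add: \<phi>_eq[OF x(1)] algebra_simps sum.distrib sum_distrib_left)
    also have "\<dots> = l" using W_level segment_of_mem[OF x(1)] v_null by simp
    finally have "real_of_rat (\<Sum>i<d. c i * of_int (\<phi> x i)) = real_of_rat l" by simp
    thus "(\<Sum>i<d. real_of_rat (c i) * real_of_int (p i)) = real_of_rat l"
      unfolding x(2) by (simp add: of_rat_sum of_rat_mult)
  qed
  with B(1) show False by contradiction
qed

text \<open>Coordinate 0 carries x itself; this makes the map injective and reflects additive relations.\<close>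
definition embedding :: "nat \<Rightarrow> (nat \<Rightarrow> nat \<Rightarrow> int) \<Rightarrow> int \<Rightarrow> nat \<Rightarrow> int" where
  "embedding d V x i = (if i = 0 then x else if i < d then V i (segment_of x) else 0)"

lemma embedding_freiman_iso:
  assumes "\<And>i. 0 < i \<Longrightarrow> i < d \<Longrightarrow> S_kernel (V i)"
  shows "freiman_iso2 A (embedding d V ` A)"
proof -
  have "inj_on (embedding d V) A"
    by (rule inj_onI) (drule fun_cong[of _ _ 0], simp add: embedding_def)
  hence bij: "bij_betw (embedding d V) A (embedding d V ` A)" by (rule inj_on_imp_bij_betw)
  have "x + y = z + t \<longleftrightarrow> embedding d V x + embedding d V y = embedding d V z + embedding d V t"
    if xyzt: "x \<in> A" "y \<in> A" "z \<in> A" "t \<in> A" for x y z t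
  proof
    assume "embedding d V x + embedding d V y = embedding d V z + embedding d V t"
    from fun_cong[OF this, of 0] show "x + y = z + t" by (simp add: embedding_def)
  next
    assume sum_eq: "x + y = z + t"
    have "V i (segment_of x) + V i (segment_of y) = V i (segment_of z) + V i (segment_of t)"
      if "0 < i" "i < d" for i
      using S_kernel_freiman_hom[OF assms[OF that]] xyzt sum_eq unfolding freiman_hom2_def by blast
    thus "embedding d V x + embedding d V y = embedding d V z + embedding d V t"
      using sum_eq by (auto simp: embedding_def fun_eq_iff)
  qed
  with bij show ?thesis unfolding freiman_iso2_def by blast
qed

lemma embedding_intvecs: "0 < d \<Longrightarrow> embedding d V ` A \<subseteq> intvecs d"
  by (auto simp: intvecs_def embedding_def)

text \<open>Evaluating a hyperplane equation at two consecutive points kills the coefficient of x,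
  at a f0 the constant term, and at a (p i) the coefficient of V i.\<close>
lemma embedding_not_in_hyperplane:
  assumes d: "0 < d" and f0: "f0 < s"
    and pivot: "\<And>i. 0 < i \<Longrightarrow> i < d \<Longrightarrow> p i < s \<and> V i (p i) \<noteq> 0"
    and off_pivot: "\<And>i k. 0 < i \<Longrightarrow> i < d \<Longrightarrow> 0 < k \<Longrightarrow> k < d \<Longrightarrow> k \<noteq> i \<Longrightarrow> V k (p i) = 0"
    and at_f0: "\<And>k. 0 < k \<Longrightarrow> k < d \<Longrightarrow> V k f0 = 0"
  shows "\<not> in_hyperplane d (embedding d V ` A)"
proof
  assume "in_hyperplane d (embedding d V ` A)"
  then obtain c \<alpha> where c_nz: "\<exists>i<d. c i \<noteq> 0"
    and c: "\<And>x. x \<in> A \<Longrightarrow> (\<Sum>i<d. c i * real_of_int (embedding d V x i)) = \<alpha>"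
    unfolding in_hyperplane_def by auto
  define h where "h j = (\<Sum>i\<in>{1..<d}. c i * of_int (V i j))" for j
  have eq: "c 0 * of_int x + h (segment_of x) = \<alpha>" if "x \<in> A" for x
  proof -
    have "{..<d} = insert 0 {1..<d}" using d by auto
    hence "(\<Sum>i<d. c i * real_of_int (embedding d V x i))
        = c 0 * of_int x + (\<Sum>i\<in>{1..<d}. c i * real_of_int (embedding d V x i))"
      by (simp add: embedding_def)
    also have "(\<Sum>i\<in>{1..<d}. c i * real_of_int (embedding d V x i)) = h (segment_of x)"
      unfolding h_def by (rule sum.cong) (auto simp: embedding_def)
    finally show ?thesis using c[OF that] by simp
  qed
  obtain x0 where x0: "x0 \<in> A" "x0 + 1 \<in> A" "segment_of (x0 + 1) = segment_of x0"
    by (rule consecutive_points)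
  have c0: "c 0 = 0" using eq[OF x0(1)] eq[OF x0(2)] x0(3) by (simp add: algebra_simps)
  have "h f0 = 0" unfolding h_def using at_f0 by (intro sum.neutral) auto
  hence \<alpha>0: "\<alpha> = 0" using eq segment_start[OF f0] c0 by force
  have "c i = 0" if "0 < i" "i < d" for i
  proof -
    have "h (p i) = (\<Sum>k\<in>{i}. c k * of_int (V k (p i)))"
      unfolding h_def by (rule sum.mono_neutral_right) (use that off_pivot in auto)
    moreover have "h (p i) = 0" using eq segment_start pivot[OF that] c0 \<alpha>0 by force
    ultimately show ?thesis using pivot[OF that] by simp
  qed
  with c0 c_nz show False by (metis neq0_conv)
qed

lemma full_dimensional_model:
  fixes U :: "nat \<Rightarrow> nat \<Rightarrow> int"
  assumes F: "F \<subseteq> {..<s}" "f0 \<in> F"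
    and U_kernel: "\<And>f. f \<in> F \<Longrightarrow> S_kernel (U f)"
    and U_diag: "\<And>f. f \<in> F \<Longrightarrow> U f f \<noteq> 0"
    and U_off: "\<And>f f'. f \<in> F \<Longrightarrow> f' \<in> F - {f} \<Longrightarrow> U f f' = 0"
  shows "\<exists>B. B \<subseteq> intvecs (card F) \<and> \<not> in_hyperplane (card F) B \<and> freiman_iso2 A B"
proof -
  define d where "d = card F"
  have fin: "finite F" using F(1) finite_subset by blast
  hence d_pos: "0 < d" using F(2) d_def card_gt_0_iff by auto
  have "card (F - {f0}) = d - 1" using fin F(2) by (simp add: d_def)
  then obtain g where "bij_betw g {1..d - 1} (F - {f0})"
    using ex_bij_betw_nat_finite_1[of "F - {f0}"] fin by auto
  moreover have "{1..d - 1} = {1..<d}" using d_pos by auto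
  ultimately have g: "bij_betw g {1..<d} (F - {f0})" by simp
  have g_F: "g i \<in> F - {f0}" if "0 < i" "i < d" for i
    using that bij_betw_apply[OF g] by simp
  have g_inj: "g k \<noteq> g i" if "0 < i" "i < d" "0 < k" "k < d" "k \<noteq> i" for i k
    using that bij_betw_imp_inj_on[OF g] by (auto dest: inj_onD)
  define V where "V i = U (g i)" for i
  have "\<not> in_hyperplane d (embedding d V ` A)"
  proof (rule embedding_not_in_hyperplane[OF d_pos, of f0 g])
    show "f0 < s" using F by auto
    show "g i < s \<and> V i (g i) \<noteq> 0" if "0 < i" "i < d" for i
      using g_F[OF that] F(1) U_diag unfolding V_def by auto
    show "V k (g i) = 0" if "0 < i" "i < d" "0 < k" "k < d" "k \<noteq> i" for i k
      using U_off g_F g_inj that unfolding V_def by simp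
    show "V k f0 = 0" if "0 < k" "k < d" for k
      using U_off g_F[OF that] F(2) unfolding V_def by simp
  qed
  moreover have "freiman_iso2 A (embedding d V ` A)"
    using U_kernel g_F unfolding V_def by (intro embedding_freiman_iso) simp
  ultimately show ?thesis using embedding_intvecs[OF d_pos] unfolding d_def by blast
qed

theorem freiman_dim_eq_card_free_coordinates:
  assumes F: "F \<subseteq> {..<s}"
    and unit: "\<And>f. f \<in> F \<Longrightarrow> \<exists>w :: nat \<Rightarrow> rat. S_kernel w \<and> w f = 1 \<and> (\<forall>f'\<in>F - {f}. w f' = 0)"
    and determined: "determines_kernel F"
  shows "freiman_dim A = card F"
proof -
  obtain j where "j < s" using long_segment by blast
  with determined S_kernel_const[of "1 :: rat"] obtain f0 where f0: "f0 \<in> F"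
    unfolding determines_kernel_def by fastforce
  have "\<exists>u :: nat \<Rightarrow> int. S_kernel u \<and> u f \<noteq> 0 \<and> (\<forall>f'\<in>F - {f}. u f' = 0)" if f: "f \<in> F" for f
  proof -
    obtain w :: "nat \<Rightarrow> rat" where w: "S_kernel w" "w f = 1" "\<forall>f'\<in>F - {f}. w f' = 0"
      using unit[OF f] by blast
    obtain N u where "N > 0" "S_kernel u" and u: "\<And>j. j < s \<Longrightarrow> of_int (u j) = of_int N * w j"
      using S_kernel_integral_multiple[OF w(1)] by blast
    moreover have "u f \<noteq> 0" using u[of f] w(2) \<open>N > 0\<close> f F by auto
    moreover have "u f' = 0" if "f' \<in> F - {f}" for f'
    proof -
      have "f' < s" using that F by auto
      with u[of f'] w(3) that show ?thesis by simp
    qed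
    ultimately show ?thesis by blast
  qed
  then obtain U :: "nat \<Rightarrow> nat \<Rightarrow> int"
    where U: "\<And>f. f \<in> F \<Longrightarrow> S_kernel (U f) \<and> U f f \<noteq> 0 \<and> (\<forall>f'\<in>F - {f}. U f f' = 0)"
    by metis
  show ?thesis
    unfolding freiman_dim_def
  proof (rule Greatest_equality)
    show "\<exists>B. B \<subseteq> intvecs (card F) \<and> \<not> in_hyperplane (card F) B \<and> freiman_iso2 A B"
      using full_dimensional_model[OF F f0, of U] U by blast
    show "d \<le> card F" if "\<exists>B. B \<subseteq> intvecs d \<and> \<not> in_hyperplane d B \<and> freiman_iso2 A B" for d
      using that model_dim_le_card[OF F f0 determined] by blast
  qed
qed

lemma freiman_dim_eq_nullity: "freiman_dim A = s - mat_rank (S_mat s a b)"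
proof -
  let ?m = "length (S_rows s a b)"
  have S: "S_mat s a b \<in> carrier_mat ?m s" unfolding S_mat_def by simp
  have rank: "mat_rank (S_mat s a b) = vec_space.rank ?m (S_mat s a b)"
    unfolding mat_rank_def using S by simp
  show ?thesis
  proof (rule kernel_free_coordinates[OF S])
    fix F assume F: "F \<subseteq> {..<s}" and card_F: "card F = s - vec_space.rank ?m (S_mat s a b)"
      and unit: "\<And>f. f \<in> F \<Longrightarrow>
        \<exists>w. S_mat s a b *\<^sub>v vec s w = 0\<^sub>v ?m \<and> w f = 1 \<and> (\<forall>f'\<in>F - {f}. w f' = 0)"
      and determined: "\<And>w. S_mat s a b *\<^sub>v vec s w = 0\<^sub>v ?m \<Longrightarrow> \<forall>f\<in>F. w f = 0 \<Longrightarrow> \<forall>j<s. w j = 0"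
    have "determines_kernel F"
      using determined unfolding determines_kernel_def S_mat_kernel_iff[symmetric] by blast
    with F unit have "freiman_dim A = card F"
      by (intro freiman_dim_eq_card_free_coordinates) (simp_all add: S_mat_kernel_iff)
    thus ?thesis using card_F rank by simp
  qed
qed

end

theorem corollary2p2:
  fixes A :: "int set" and s :: nat and a b :: "nat \<Rightarrow> int"
  assumes seg: "\<And>i. i < s \<Longrightarrow> a i \<le> b i"
    and gaps: "\<And>i. i + 1 < s \<Longrightarrow> b i + 1 < a (i + 1)"
    and nontriv: "\<exists>i<s. a i < b i"
    and A_def: "A = (\<Union>i<s. {a i..b i})"
    and s_ge: "1 \<le> s" and s_le: "s \<le> card A - 1"
  shows "freiman_dim A = s - mat_rank (S_mat s a b)"
proof -
  interpret segment_union A s a b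
    using A_def seg gaps nontriv by unfold_locales
  show ?thesis by (rule freiman_dim_eq_nullity)
qed

end
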